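(* Let $\alpha,a,b\in\mathbb{C}$ be such that none of $\alpha+a,\alpha-a,\alpha+b,\alpha-b$ belongs to $\{0,-1,-2,\ldots\}$. Then \[ \sum_{k=0}^{\infty}\frac{k+\alpha}{((k+\alpha)^2-a^2)((k+\alpha)^2-b^2)} =\frac12\sum_{n=1}^{\infty}\frac{(-1)^{n-1}(1\pm a\pm b)_{n-1}\bigl(5n^2-6n(1-\alpha)+2(1-\alpha)^2-a^2-b^2\bigr)}{n\binom{2n}{n}(\alpha\pm a)_n(\alpha\pm b)_n}. \]
   Context: $(x)_n=x(x+1)\cdots(x+n-1)$, $(x)_0=1$, is the Pochhammer symbol. The notation $(u\pm v\pm w)_m$ denotes the product of the four factors $(u+v+w)_m(u+v-w)_m(u-v+w)_m(u-v-w)_m$, and $(u\pm v)_m=(u+v)_m(u-v)_m$. *)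

theory Defs
  imports "HOL-Analysis.Analysis"
begin

end

theory Submission
  imports Defs "HOL-Real_Asymp.Real_Asymp"
begin

text \<open>With \<open>x = k + \<alpha>\<close>, the terms
  \<open>F(n,k) = (-1)^n (2x+n) (1\<plusminus>a\<plusminus>b)\<^sub>n / (2 binom(2n,n) (x\<plusminus>a)\<^sub>n\<^sub>+\<^sub>1 (x\<plusminus>b)\<^sub>n\<^sub>+\<^sub>1)\<close> and
  \<open>G(n,k) = R\<^sub>n\<^sub>+\<^sub>1(x)/2\<close>, where \<open>R\<^sub>n(x)\<close> is the \<open>n\<close>-th right-hand summand with \<open>\<alpha>\<close> replaced
  by \<open>x\<close>, form a WZ pair: \<open>F(n,k) - F(n+1,k) = G(n,k) - G(n,k+1)\<close>, a polynomial identity after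
  clearing the common hypergeometric factor. Summing over \<open>k\<close> and telescoping in \<open>n\<close> gives
  \<open>\<Sum>\<^sub>n G(n,0) = \<Sum>\<^sub>k F(0,k) - lim\<^sub>n \<Sum>\<^sub>k F(n,k)\<close>. Here \<open>F(0,k)\<close> is the left-hand summand, and
  the limit vanishes because \<open>|F(n+1,k)| \<le> \<beta>\<^sub>n |F(n,k)|\<close> uniformly in \<open>k\<close>, with \<open>\<beta>\<^sub>n \<rightarrow> 1/4\<close>.\<close>

section \<open>Telescoping a WZ pair\<close>

lemma wz_pair_sums:
  fixes F G :: "nat \<Rightarrow> nat \<Rightarrow> 'a::real_normed_vector"
  assumes wz: "\<And>n k. F n k - F (Suc n) k = G n k - G n (Suc k)"
    and summable: "\<And>n. summable (F n)"
    and G_tendsto: "\<And>n. G n \<longlonglongrightarrow> 0"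
    and suminf_F_tendsto: "(\<lambda>n. suminf (F n)) \<longlonglongrightarrow> 0"
  shows "(\<lambda>n. G n 0) sums suminf (F 0)"
proof -
  have step: "suminf (F n) - suminf (F (Suc n)) = G n 0" for n
  proof -
    have "(\<lambda>k. F n k - F (Suc n) k) sums (suminf (F n) - suminf (F (Suc n)))"
      by (intro sums_diff summable_sums summable)
    moreover have "(\<lambda>k. F n k - F (Suc n) k) sums (G n 0 - 0)"
      unfolding wz by (rule telescope_sums'[OF G_tendsto])
    ultimately show ?thesis
      by (simp add: sums_unique2)
  qed
  have "(\<Sum>n<N. G n 0) = suminf (F 0) - suminf (F N)" for N
    by (induction N) (simp_all add: step[symmetric])
  moreover have "(\<lambda>N. suminf (F 0) - suminf (F N)) \<longlonglongrightarrow> suminf (F 0) - 0"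
    by (intro tendsto_diff tendsto_const suminf_F_tendsto)
  ultimately show ?thesis
    unfolding sums_def by simp
qed

lemma suminf_tendsto_0_of_ratio_le:
  fixes F :: "nat \<Rightarrow> nat \<Rightarrow> 'a::banach"
  assumes summable: "\<And>n. summable (\<lambda>k. norm (F n k))"
    and c: "0 \<le> c" "c < 1"
    and ratio: "eventually (\<lambda>n. \<forall>k. norm (F (Suc n) k) \<le> c * norm (F n k)) sequentially"
  shows "(\<lambda>n. suminf (F n)) \<longlonglongrightarrow> 0"
proof -
  obtain N where N: "\<And>n k. n \<ge> N \<Longrightarrow> norm (F (Suc n) k) \<le> c * norm (F n k)"
    using ratio unfolding eventually_sequentially by blast
  have geometric: "norm (F (N + j) k) \<le> c ^ j * norm (F N k)" for j k
  proof (induction j)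
    case (Suc j)
    have "norm (F (N + Suc j) k) \<le> c * norm (F (N + j) k)"
      using N[of "N + j"] by simp
    also have "\<dots> \<le> c * (c ^ j * norm (F N k))"
      using Suc c by (intro mult_left_mono)
    finally show ?case by simp
  qed simp
  have bound: "norm (suminf (F (j + N))) \<le> c ^ j * (\<Sum>k. norm (F N k))" for j
  proof -
    have "norm (suminf (F (j + N))) \<le> (\<Sum>k. norm (F (N + j) k))"
      using summable_norm[OF summable[of "j + N"]] by (simp add: add.commute)
    also have "\<dots> \<le> (\<Sum>k. c ^ j * norm (F N k))"
      by (intro suminf_le summable summable_mult geometric)
    also have "\<dots> = c ^ j * (\<Sum>k. norm (F N k))"
      by (rule suminf_mult[OF summable])
    finally show ?thesis .
  qed
  have "(\<lambda>j. c ^ j * (\<Sum>k. norm (F N k))) \<longlonglongrightarrow> 0"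
    using c by (intro tendsto_mult_left_zero LIMSEQ_power_zero) simp
  then have "(\<lambda>j. suminf (F (j + N))) \<longlonglongrightarrow> 0"
    by (rule Lim_null_comparison[rotated]) (use bound in auto)
  then show ?thesis
    by (rule LIMSEQ_offset)
qed

section \<open>The WZ pair\<close>

lemma central_binomial_Suc:
  "Suc n * (2 * Suc n choose Suc n) = 2 * (2 * n + 1) * (2 * n choose n)"
proof -
  have "Suc n * (2 * Suc n choose Suc n) = Suc (Suc (2 * n)) * (Suc (2 * n) choose n)"
    using Suc_times_binomial_eq[of "Suc (2 * n)" n] by simp
  also have "Suc (2 * n) choose n = Suc (2 * n) choose Suc n"
    using binomial_symmetric[of n "Suc (2 * n)"] by simp
  also have "Suc (Suc (2 * n)) * \<dots> = 2 * (Suc n * (Suc (2 * n) choose Suc n))"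
    by simp
  also have "Suc n * (Suc (2 * n) choose Suc n) = Suc (2 * n) * (2 * n choose n)"
    using Suc_times_binomial_eq[of "2 * n" n] by simp
  finally show ?thesis by simp
qed

lemma of_nat_central_binomial_Suc:
  "(of_nat (Suc n) * of_nat (2 * Suc n choose Suc n) :: 'a::semiring_1)
     = 2 * (2 * of_nat n + 1) * of_nat (2 * n choose n)"
  using arg_cong[OF central_binomial_Suc[of n], of "of_nat :: nat \<Rightarrow> 'a"]
  by (simp only: of_nat_mult of_nat_add of_nat_numeral of_nat_1)

lemma inverse_central_binomial_Suc:
  "inverse (of_nat (2 * Suc n choose Suc n) :: 'a::field_char_0)
     = of_nat (Suc n) / (2 * (2 * of_nat n + 1)) * inverse (of_nat (2 * n choose n))"
proof -
  have "(of_nat (2 * Suc n choose Suc n) :: 'a)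
          = 2 * (2 * of_nat n + 1) * of_nat (2 * n choose n) / of_nat (Suc n)"
    using of_nat_central_binomial_Suc[of n, where 'a='a]
    by (subst nonzero_eq_divide_eq) (simp_all only: of_nat_neq_0 not_False_eq_True mult.commute)
  then show ?thesis
    by (simp only: inverse_divide inverse_mult_distrib divide_inverse inverse_inverse_eq mult_ac)
qed

text \<open>\<open>poch_num a b n = (1\<plusminus>a\<plusminus>b)\<^sub>n\<close> and \<open>poch_den a b x n = (x\<plusminus>a)\<^sub>n (x\<plusminus>b)\<^sub>n\<close>;
  the WZ pair is \<open>F(n,k) = wz_F a b (k + \<alpha>) n\<close> and \<open>G(n,k) = rhs_term a b (k + \<alpha>) (n + 1) / 2\<close>.\<close>

definition quartic :: "complex \<Rightarrow> complex \<Rightarrow> complex \<Rightarrow> complex" where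
  "quartic a b y = (y\<^sup>2 - a\<^sup>2) * (y\<^sup>2 - b\<^sup>2)"

definition poch_num :: "complex \<Rightarrow> complex \<Rightarrow> nat \<Rightarrow> complex" where
  "poch_num a b n = pochhammer (1 + a + b) n * pochhammer (1 + a - b) n
                    * pochhammer (1 - a + b) n * pochhammer (1 - a - b) n"

definition poch_den :: "complex \<Rightarrow> complex \<Rightarrow> complex \<Rightarrow> nat \<Rightarrow> complex" where
  "poch_den a b x n = (pochhammer (x + a) n * pochhammer (x - a) n)
                      * (pochhammer (x + b) n * pochhammer (x - b) n)"

definition rhs_quadratic :: "complex \<Rightarrow> complex \<Rightarrow> complex \<Rightarrow> nat \<Rightarrow> complex" where
  "rhs_quadratic a b x n = 5 * of_nat n ^ 2 - 6 * of_nat n * (1 - x) + 2 * (1 - x)\<^sup>2 - a\<^sup>2 - b\<^sup>2"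

definition rhs_term :: "complex \<Rightarrow> complex \<Rightarrow> complex \<Rightarrow> nat \<Rightarrow> complex" where
  "rhs_term a b x n = (-1) ^ (n - 1) * poch_num a b (n - 1) * rhs_quadratic a b x n
                      / (of_nat n * of_nat (2 * n choose n) * poch_den a b x n)"

definition wz_hyper :: "complex \<Rightarrow> complex \<Rightarrow> complex \<Rightarrow> nat \<Rightarrow> complex" where
  "wz_hyper a b x n = (-1) ^ n * poch_num a b n / (of_nat (2 * n choose n) * poch_den a b x (Suc n))"

definition wz_F :: "complex \<Rightarrow> complex \<Rightarrow> complex \<Rightarrow> nat \<Rightarrow> complex" where
  "wz_F a b x n = (2 * x + of_nat n) / 2 * wz_hyper a b x n"

lemma poch_num_Suc: "poch_num a b (Suc n) = poch_num a b n * quartic (a + b) (a - b) (of_nat n + 1)"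
  by (simp add: poch_num_def quartic_def pochhammer_Suc power2_eq_square algebra_simps)

lemma poch_den_Suc: "poch_den a b x (Suc n) = poch_den a b x n * quartic a b (x + of_nat n)"
  by (simp add: poch_den_def quartic_def pochhammer_Suc power2_eq_square algebra_simps)

lemma poch_den_rec: "poch_den a b x (Suc n) = quartic a b x * poch_den a b (x + 1) n"
  by (simp add: poch_den_def quartic_def pochhammer_rec power2_eq_square algebra_simps)

lemma wz_hyper_Suc:
  "wz_hyper a b x (Suc n) = - wz_hyper a b x n * (of_nat (Suc n) * quartic (a + b) (a - b) (of_nat n + 1))
     / (2 * (2 * of_nat n + 1) * quartic a b (x + of_nat n + 1))"
  unfolding wz_hyper_def poch_num_Suc poch_den_Suc[of _ _ _ "Suc n"] divide_inverse inverse_mult_distrib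
    inverse_central_binomial_Suc
  by (simp only: of_nat_Suc add_ac power_Suc) algebra

lemma rhs_term_Suc:
  "rhs_term a b x (Suc n) = rhs_quadratic a b x (Suc n) / (2 * (2 * of_nat n + 1)) * wz_hyper a b x n"
  unfolding rhs_term_def wz_hyper_def of_nat_central_binomial_Suc divide_inverse inverse_mult_distrib
  by (simp only: diff_Suc_1) algebra

lemma wz_hyper_shift:
  assumes "quartic a b x \<noteq> 0"
  shows "wz_hyper a b (x + 1) n = wz_hyper a b x n * quartic a b x / quartic a b (x + of_nat n + 1)"
proof -
  have "quartic a b x * poch_den a b (x + 1) (Suc n) = poch_den a b x (Suc n) * quartic a b (x + of_nat n + 1)"
    using poch_den_rec[of a b x "Suc n"] poch_den_Suc[of a b x "Suc n"] by (simp add: add_ac)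
  then have "poch_den a b (x + 1) (Suc n) = poch_den a b x (Suc n) * quartic a b (x + of_nat n + 1) / quartic a b x"
    using assms by (simp add: nonzero_eq_divide_eq mult.commute)
  then show ?thesis
    by (simp add: wz_hyper_def divide_inverse inverse_mult_distrib mult_ac)
qed

text \<open>The WZ certificate: multiplied by \<open>wz_hyper a b x n / (4 (2n+1) quartic a b (x+n+1))\<close>
  it becomes the WZ equation.\<close>

lemma wz_certificate:
  "2 * (2 * of_nat n + 1) * (2 * x + of_nat n) * quartic a b (x + of_nat n + 1)
     + of_nat (Suc n) * (2 * x + of_nat n + 1) * quartic (a + b) (a - b) (of_nat n + 1)
   = rhs_quadratic a b x (Suc n) * quartic a b (x + of_nat n + 1)
     - rhs_quadratic a b (x + 1) (Suc n) * quartic a b x"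
  by (simp add: quartic_def rhs_quadratic_def algebra_simps power2_eq_square)

lemma wz_F_difference:
  assumes "poch_den a b x (Suc (Suc n)) \<noteq> 0"
  shows "wz_F a b x n - wz_F a b x (Suc n) = rhs_term a b x (Suc n) / 2 - rhs_term a b (x + 1) (Suc n) / 2"
proof -
  define t :: complex where "t = 2 * of_nat n + 1"
  define e where "e = quartic a b (x + of_nat n + 1)"
  have q0: "quartic a b x \<noteq> 0"
    using assms by (metis mult_zero_left poch_den_rec)
  have e: "e \<noteq> 0"
    using assms poch_den_Suc[of a b x "Suc n"] by (auto simp: e_def add_ac)
  have "t = of_nat (2 * n + 1)"
    by (simp add: t_def)
  then have t: "t \<noteq> 0"
    by (simp only: of_nat_eq_0_iff)
  have "wz_F a b x n - wz_F a b x (Suc n) - (rhs_term a b x (Suc n) / 2 - rhs_term a b (x + 1) (Suc n) / 2)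
     = wz_hyper a b x n / (4 * t * e)
       * ((2 * t * (2 * x + of_nat n) * e
             + of_nat (Suc n) * (2 * x + of_nat n + 1) * quartic (a + b) (a - b) (of_nat n + 1))
          - (rhs_quadratic a b x (Suc n) * e - rhs_quadratic a b (x + 1) (Suc n) * quartic a b x))"
    using e t unfolding wz_F_def wz_hyper_Suc rhs_term_Suc wz_hyper_shift[OF q0] t_def[symmetric] e_def[symmetric]
    by (simp add: field_simps)
  then show ?thesis
    unfolding t_def e_def wz_certificate by simp
qed

lemma wz_F_0: "wz_F a b x 0 = x / quartic a b x"
proof -
  have "poch_den a b x (Suc 0) = quartic a b x"
    by (simp add: poch_den_def quartic_def power2_eq_square algebra_simps)
  then show ?thesis
    by (simp add: wz_F_def wz_hyper_def poch_num_def)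
qed

lemma pochhammer_of_nat_add_neq_0:
  fixes z :: "'a::field_char_0"
  assumes "z \<notin> \<int>\<^sub>\<le>\<^sub>0"
  shows "pochhammer (of_nat k + z) n \<noteq> 0"
proof
  assume "pochhammer (of_nat k + z) n = 0"
  then obtain j where "of_nat k + z = - of_nat j"
    by (auto simp: pochhammer_eq_0_iff)
  then have "z = - of_nat (k + j)"
    by (simp add: algebra_simps)
  then show False
    using assms minus_of_nat_in_nonpos_Ints by metis
qed

lemma poch_den_of_nat_add_neq_0:
  assumes "\<alpha> + a \<notin> \<int>\<^sub>\<le>\<^sub>0" "\<alpha> - a \<notin> \<int>\<^sub>\<le>\<^sub>0" "\<alpha> + b \<notin> \<int>\<^sub>\<le>\<^sub>0" "\<alpha> - b \<notin> \<int>\<^sub>\<le>\<^sub>0"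
  shows "poch_den a b (of_nat k + \<alpha>) n \<noteq> 0"
  using assms[THEN pochhammer_of_nat_add_neq_0[where k=k and n=n]]
  by (simp add: poch_den_def add.assoc add_diff_eq)

section \<open>Estimates\<close>

lemma Re_of_nat_add_ge: "real k - norm z \<le> Re (of_nat k + z)" for z :: complex
  using abs_Re_le_cmod[of z] by (simp add: abs_le_iff)

lemma norm_of_nat_add_le: "norm (of_nat k + z) \<le> real k + norm z" for z :: complex
  using norm_triangle_ineq[of "of_nat k" z] by simp

lemma norm_of_nat_odd: "norm (2 * of_nat n + 1 :: complex) = 2 * real n + 1"
proof -
  have "norm (of_nat (2 * n + 1) :: complex) = real (2 * n + 1)"
    by (rule norm_of_nat)
  then show ?thesis
    by (simp add: add.commute)
qed

lemma norm_square_diff_ge: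
  fixes y c :: complex
  assumes "norm c \<le> Re y"
  shows "(Re y - norm c)\<^sup>2 \<le> norm (y\<^sup>2 - c\<^sup>2)"
proof -
  have "Re y - norm c \<le> norm (y - c)"
    using abs_Re_le_cmod[of c] complex_Re_le_cmod[of "y - c"] by (auto simp: abs_le_iff)
  moreover have "Re y - norm c \<le> norm (y + c)"
    using abs_Re_le_cmod[of c] complex_Re_le_cmod[of "y + c"] by (auto simp: abs_le_iff)
  ultimately have "(Re y - norm c) * (Re y - norm c) \<le> norm (y - c) * norm (y + c)"
    using assms by (intro mult_mono) auto
  also have "\<dots> = norm (y\<^sup>2 - c\<^sup>2)"
    by (simp add: norm_mult[symmetric] power2_eq_square algebra_simps)
  finally show ?thesis
    by (simp add: power2_eq_square)
qed

lemma norm_quartic_ge: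
  assumes "norm a + norm b \<le> Re y"
  shows "(Re y - norm a - norm b) ^ 4 \<le> norm (quartic a b y)"
proof -
  have "(Re y - norm a - norm b)\<^sup>2 \<le> (Re y - norm a)\<^sup>2"
    using assms by (intro power_mono) auto
  also have "\<dots> \<le> norm (y\<^sup>2 - a\<^sup>2)"
    using assms by (intro norm_square_diff_ge) (auto intro: order_trans[OF _ assms])
  finally have a: "(Re y - norm a - norm b)\<^sup>2 \<le> norm (y\<^sup>2 - a\<^sup>2)" .
  have "(Re y - norm a - norm b)\<^sup>2 \<le> (Re y - norm b)\<^sup>2"
    using assms by (intro power_mono) auto
  also have "\<dots> \<le> norm (y\<^sup>2 - b\<^sup>2)"
    using assms by (intro norm_square_diff_ge) (auto intro: order_trans[OF _ assms])
  finally have "(Re y - norm a - norm b)\<^sup>2 * (Re y - norm a - norm b)\<^sup>2 \<le> norm (quartic a b y)"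
    unfolding quartic_def norm_mult using a by (intro mult_mono) auto
  then show ?thesis
    by (simp flip: power_add)
qed

lemma norm_quartic_le:
  "norm (quartic a b y) \<le> ((norm y)\<^sup>2 + (norm a)\<^sup>2) * ((norm y)\<^sup>2 + (norm b)\<^sup>2)"
  unfolding quartic_def norm_mult
  by (intro mult_mono order_trans[OF norm_triangle_ineq4]) (auto simp: norm_power)

lemma norm_quartic_of_nat_add_ge:
  assumes r: "norm \<alpha> + norm a + norm b \<le> r" and j: "r \<le> real j"
  shows "(real j - r) ^ 4 \<le> norm (quartic a b (of_nat j + \<alpha>))"
proof -
  have "real j - r \<le> Re (of_nat j + \<alpha>) - norm a - norm b"
    using r Re_of_nat_add_ge[of j \<alpha>] by linarith
  then show ?thesis
    using j by (intro order_trans[OF power_mono norm_quartic_ge]) auto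
qed

lemma norm_quartic_add_diff_le:
  assumes "norm a + norm b \<le> r"
  shows "norm (quartic (a + b) (a - b) (of_nat N + 1)) \<le> ((real N + 1)\<^sup>2 + r\<^sup>2)\<^sup>2"
proof -
  have "norm (of_nat N + 1 :: complex) = real N + 1"
    using norm_of_nat[of "Suc N", where 'a=complex] by (simp add: add.commute)
  then have "norm (quartic (a + b) (a - b) (of_nat N + 1))
               \<le> ((real N + 1)\<^sup>2 + (norm (a + b))\<^sup>2) * ((real N + 1)\<^sup>2 + (norm (a - b))\<^sup>2)"
    using norm_quartic_le[of "a + b" "a - b" "of_nat N + 1"] by simp
  also have "\<dots> \<le> ((real N + 1)\<^sup>2 + r\<^sup>2)\<^sup>2"
  proof -
    have "norm (a + b) \<le> r" "norm (a - b) \<le> r"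
      using norm_triangle_ineq[of a b] norm_triangle_ineq4[of a b] assms by linarith+
    then have "(norm (a + b))\<^sup>2 \<le> r\<^sup>2" "(norm (a - b))\<^sup>2 \<le> r\<^sup>2"
      by (auto intro!: power_mono)
    then show ?thesis
      by (simp add: power2_eq_square[of "_ + r\<^sup>2"] mult_mono add_nonneg_nonneg)
  qed
  finally show ?thesis .
qed

lemma norm_pochhammer_ge_1:
  fixes z :: complex
  assumes "1 \<le> Re z"
  shows "1 \<le> norm (pochhammer z n)"
proof (induction n)
  case (Suc n)
  have "1 \<le> Re (z + of_nat n)"
    using assms by simp
  also have "\<dots> \<le> norm (z + of_nat n)"
    by (rule complex_Re_le_cmod)
  finally have "1 * 1 \<le> norm (pochhammer z n) * norm (z + of_nat n)"
    using Suc by (intro mult_mono) auto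
  then show ?case
    by (simp add: pochhammer_Suc norm_mult)
qed simp

lemma norm_poch_den_ge:
  assumes "norm a + norm b \<le> Re x"
  shows "(Re x - norm a - norm b) ^ 4 \<le> norm (poch_den a b x (Suc n))"
proof -
  have ge_1: "1 \<le> norm (pochhammer (x + 1 + c) n)" if "norm c \<le> norm a + norm b" for c
    using assms that abs_Re_le_cmod[of c] by (intro norm_pochhammer_ge_1) (auto simp: abs_le_iff)
  have poch_den_eq: "poch_den a b (x + 1) n = pochhammer (x + 1 + a) n * pochhammer (x + 1 + - a) n
                                 * (pochhammer (x + 1 + b) n * pochhammer (x + 1 + - b) n)"
    by (simp add: poch_den_def)
  have "1 \<le> norm (pochhammer (x + 1 + a) n)" "1 \<le> norm (pochhammer (x + 1 + - a) n)"
    "1 \<le> norm (pochhammer (x + 1 + b) n)" "1 \<le> norm (pochhammer (x + 1 + - b) n)"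
    by (rule ge_1; simp)+
  then have "1 * 1 * (1 * 1) \<le> norm (poch_den a b (x + 1) n)"
    unfolding poch_den_eq norm_mult by (intro mult_mono) auto
  moreover have "(Re x - norm a - norm b) ^ 4 \<le> norm (quartic a b x)"
    using assms by (rule norm_quartic_ge)
  ultimately have "(Re x - norm a - norm b) ^ 4 * 1 \<le> norm (quartic a b x) * norm (poch_den a b (x + 1) n)"
    using assms by (intro mult_mono) auto
  then show ?thesis
    by (simp add: poch_den_rec norm_mult)
qed

lemma norm_wz_hyper_le:
  assumes r: "norm \<alpha> + norm a + norm b \<le> r" and k: "r < real k"
  shows "norm (wz_hyper a b (of_nat k + \<alpha>) n)
           \<le> norm (poch_num a b n) / real (2 * n choose n) / (real k - r) ^ 4"
proof -
  have "real k - r \<le> Re (of_nat k + \<alpha>) - norm a - norm b"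
    using r Re_of_nat_add_ge[of k \<alpha>] by linarith
  then have "(real k - r) ^ 4 \<le> norm (poch_den a b (of_nat k + \<alpha>) (Suc n))"
    using k by (intro order_trans[OF power_mono norm_poch_den_ge]) auto
  then show ?thesis
    using k by (auto simp: wz_hyper_def norm_mult norm_divide norm_power
        intro!: divide_left_mono mult_left_mono mult_pos_pos)
qed

lemma summable_norm_wz_F: "summable (\<lambda>k. norm (wz_F a b (of_nat k + \<alpha>) n))"
proof -
  define r where "r = norm \<alpha> + norm a + norm b"
  define M where "M = norm (poch_num a b n) / real (2 * n choose n)"
  define g where "g k = (2 * (real k + r) + real n) / 2 * (M / (real k - r) ^ 4)" for k
  have "g \<in> O(\<lambda>k. 1 / real k ^ 2)"
    unfolding g_def by real_asymp
  moreover have "summable (\<lambda>k::nat. norm (1 / real k ^ 2))"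
    using inverse_power_summable[of 2, where 'a=real] by (simp add: divide_inverse)
  ultimately have "summable g"
    by (rule summable_comparison_test_bigo[rotated])
  then show ?thesis
  proof (rule summable_comparison_test')
    fix k assume "nat \<lceil>r\<rceil> + 1 \<le> k"
    then have k: "r < real k"
      by linarith
    have "norm (2 * x + of_nat n) \<le> 2 * norm x + real n" for x :: complex
      using norm_triangle_ineq[of "2 * x" "of_nat n"] by (simp add: norm_mult)
    then have "norm (2 * (of_nat k + \<alpha>) + of_nat n) \<le> 2 * norm (of_nat k + \<alpha>) + real n" .
    also have "\<dots> \<le> 2 * (real k + r) + real n"
      using norm_of_nat_add_le[of k \<alpha>] norm_ge_zero[of a] norm_ge_zero[of b] unfolding r_def
      by (smt (verit))
    finally have "norm (wz_F a b (of_nat k + \<alpha>) n) \<le> g k"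
      using norm_wz_hyper_le[of \<alpha> a b r k n] k
      unfolding g_def M_def wz_F_def norm_mult norm_divide
      by (intro mult_mono) (auto simp: r_def)
    then show "norm (norm (wz_F a b (of_nat k + \<alpha>) n)) \<le> g k"
      by simp
  qed
qed

lemma norm_rhs_quadratic_le:
  assumes r: "norm \<alpha> + norm a + norm b \<le> r"
  shows "norm (rhs_quadratic a b (of_nat k + \<alpha>) m)
           \<le> 5 * (real m)\<^sup>2 + 6 * real m * (1 + real k + r) + 2 * (1 + real k + r)\<^sup>2 + r\<^sup>2 + r\<^sup>2"
proof -
  define y where "y = 1 - (of_nat k + \<alpha>)"
  define M :: complex where "M = of_nat m"
  have "norm (5 * M\<^sup>2 - 6 * M * y + 2 * y\<^sup>2 - a\<^sup>2 - b\<^sup>2)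
          \<le> norm (5 * M\<^sup>2) + norm (6 * M * y) + norm (2 * y\<^sup>2) + norm (a\<^sup>2) + norm (b\<^sup>2)"
    by (intro norm_triangle_le_diff norm_triangle_le add_mono order_refl norm_triangle_ineq4)
  also have "\<dots> = 5 * (real m)\<^sup>2 + 6 * real m * norm y + 2 * (norm y)\<^sup>2 + (norm a)\<^sup>2 + (norm b)\<^sup>2"
    by (simp add: M_def norm_mult norm_power)
  also have "\<dots> \<le> 5 * (real m)\<^sup>2 + 6 * real m * (1 + real k + r) + 2 * (1 + real k + r)\<^sup>2 + r\<^sup>2 + r\<^sup>2"
  proof -
    have "norm a \<le> r" "norm b \<le> r" "norm y \<le> 1 + real k + r"
      using r norm_triangle_ineq4[of 1 "of_nat k + \<alpha>"] norm_of_nat_add_le[of k \<alpha>]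
        norm_ge_zero[of \<alpha>] norm_ge_zero[of a] norm_ge_zero[of b]
      unfolding y_def by (smt (verit) norm_one)+
    then show ?thesis
      by (intro add_mono mult_left_mono power_mono order_refl) auto
  qed
  finally show ?thesis
    by (simp add: rhs_quadratic_def y_def M_def)
qed

lemma rhs_term_tendsto_0: "(\<lambda>k. rhs_term a b (of_nat k + \<alpha>) (Suc n)) \<longlonglongrightarrow> 0"
proof (rule Lim_null_comparison)
  define r where "r = norm \<alpha> + norm a + norm b"
  define M where "M = norm (poch_num a b n) / real (2 * n choose n)"
  define q where "q k = (5 * (real (Suc n))\<^sup>2 + 6 * real (Suc n) * (1 + real k + r)
                         + 2 * (1 + real k + r)\<^sup>2 + r\<^sup>2 + r\<^sup>2) / (2 * (2 * real n + 1))" for k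
  show "(\<lambda>k. q k * (M / (real k - r) ^ 4)) \<longlonglongrightarrow> 0"
    unfolding q_def by real_asymp
  have "eventually (\<lambda>k. r < real k) sequentially"
    by real_asymp
  then show "eventually (\<lambda>k. norm (rhs_term a b (of_nat k + \<alpha>) (Suc n)) \<le> q k * (M / (real k - r) ^ 4))
               sequentially"
  proof eventually_elim
    case (elim k)
    have quadratic: "norm (rhs_quadratic a b (of_nat k + \<alpha>) (Suc n)) / (2 * (2 * real n + 1)) \<le> q k"
      using norm_rhs_quadratic_le[of \<alpha> a b r k "Suc n"] unfolding q_def r_def
      by (intro divide_right_mono) simp_all
    have "norm (rhs_term a b (of_nat k + \<alpha>) (Suc n))
            = norm (rhs_quadratic a b (of_nat k + \<alpha>) (Suc n)) / (2 * (2 * real n + 1))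
              * norm (wz_hyper a b (of_nat k + \<alpha>) n)"
      by (simp only: rhs_term_Suc norm_mult norm_divide norm_numeral norm_of_nat_odd)
    also have "\<dots> \<le> q k * (M / (real k - r) ^ 4)"
      using quadratic order_trans[OF _ quadratic] norm_wz_hyper_le[of \<alpha> a b r k n] elim
      unfolding M_def r_def by (intro mult_mono) auto
    finally show ?case .
  qed
qed

definition ratio_bound :: "real \<Rightarrow> nat \<Rightarrow> real" where
  "ratio_bound r N = (1 + 1 / (real N - 2 * r))
     * ((real N + 1) * ((real N + 1)\<^sup>2 + r\<^sup>2)\<^sup>2 / (2 * (2 * real N + 1) * (real N + 1 - r) ^ 4))"

lemma ratio_bound_tendsto: "ratio_bound r \<longlonglongrightarrow> 1 / 4"
  unfolding ratio_bound_def by real_asymp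

lemma norm_wz_F_Suc:
  "norm (wz_F a b x (Suc N))
     = norm (2 * x + of_nat N + 1) * (norm (wz_hyper a b x N) / 2)
       * ((real N + 1) * norm (quartic (a + b) (a - b) (of_nat N + 1))
          / (2 * (2 * real N + 1) * norm (quartic a b (x + of_nat N + 1))))"
proof -
  have "norm (of_nat (Suc N) :: complex) = real N + 1"
    by (simp only: norm_of_nat)
  then show ?thesis
    unfolding wz_F_def wz_hyper_Suc norm_mult norm_divide norm_minus_cancel norm_numeral norm_of_nat_odd
    by (simp add: add_ac)
qed

lemma norm_wz_F_Suc_le:
  assumes r: "norm \<alpha> + norm a + norm b \<le> r" and N: "2 * r < real N"
  shows "norm (wz_F a b (of_nat k + \<alpha>) (Suc N)) \<le> ratio_bound r N * norm (wz_F a b (of_nat k + \<alpha>) N)"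
proof -
  define x where "x = of_nat k + \<alpha>"
  define h where "h = wz_hyper a b x N"
  define A where "A = norm (2 * x + of_nat N)"
  define e where "e = quartic a b (x + of_nat N + 1)"
  define p where "p = quartic (a + b) (a - b) (of_nat N + 1)"
  have norms: "0 \<le> norm \<alpha>" "0 \<le> norm a" "0 \<le> norm b"
    by simp_all
  have "real N - 2 * r \<le> 2 * Re x + real N"
    using Re_of_nat_add_ge[of k \<alpha>] r norms unfolding x_def by linarith
  also have "\<dots> \<le> A"
    using complex_Re_le_cmod[of "2 * x + of_nat N"] by (simp add: A_def)
  finally have A: "real N - 2 * r \<le> A" .
  have A_nonneg: "0 \<le> (1 + 1 / (real N - 2 * r)) * A"
    using N by (intro mult_nonneg_nonneg) (auto simp: A_def)
  have N_pos: "0 < real N - 2 * r"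
    using N by simp
  have "(real N + 1 - r) ^ 4 \<le> (real (k + N + 1) - r) ^ 4"
    using N_pos by (intro power_mono) auto
  also have "\<dots> \<le> norm e"
    using norm_quartic_of_nat_add_ge[OF r, of "k + N + 1"] N_pos by (simp add: e_def x_def add_ac)
  finally have e: "(real N + 1 - r) ^ 4 \<le> norm e" .
  have p: "norm p \<le> ((real N + 1)\<^sup>2 + r\<^sup>2)\<^sup>2"
    unfolding p_def using r norms by (intro norm_quartic_add_diff_le) linarith
  have "norm (wz_F a b x (Suc N))
          = norm (2 * x + of_nat N + 1) * (norm h / 2) * ((real N + 1) * norm p / (2 * (2 * real N + 1) * norm e))"
    by (simp add: norm_wz_F_Suc h_def e_def p_def)
  also have "\<dots> \<le> ((1 + 1 / (real N - 2 * r)) * A) * (norm h / 2)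
                  * ((real N + 1) * ((real N + 1)\<^sup>2 + r\<^sup>2)\<^sup>2 / (2 * (2 * real N + 1) * (real N + 1 - r) ^ 4))"
  proof (intro mult_mono frac_le)
    have "norm (2 * x + of_nat N + 1) \<le> A + 1"
      unfolding A_def using norm_triangle_ineq[of "2 * x + of_nat N" 1] by simp
    also have "\<dots> \<le> (1 + 1 / (real N - 2 * r)) * A"
      using A N_pos by (simp add: field_simps)
    finally show "norm (2 * x + of_nat N + 1) \<le> (1 + 1 / (real N - 2 * r)) * A" .
  qed (use e p N_pos A_nonneg in \<open>auto intro: mult_nonneg_nonneg\<close>)
  also have "\<dots> = ratio_bound r N * norm (wz_F a b x N)"
    by (simp add: ratio_bound_def wz_F_def norm_mult norm_divide A_def h_def mult_ac)
  finally show ?thesis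
    unfolding x_def .
qed

lemma suminf_wz_F_tendsto_0: "(\<lambda>n. \<Sum>k. wz_F a b (of_nat k + \<alpha>) n) \<longlonglongrightarrow> 0"
proof (rule suminf_tendsto_0_of_ratio_le[OF summable_norm_wz_F, of "1 / 2"])
  define r where "r = norm \<alpha> + norm a + norm b"
  have "eventually (\<lambda>N. ratio_bound r N < 1 / 2) sequentially"
    using ratio_bound_tendsto by (rule order_tendstoD) simp
  moreover have "eventually (\<lambda>N. 2 * r < real N) sequentially"
    by real_asymp
  ultimately show "eventually (\<lambda>N. \<forall>k. norm (wz_F a b (of_nat k + \<alpha>) (Suc N))
                                     \<le> 1 / 2 * norm (wz_F a b (of_nat k + \<alpha>) N)) sequentially"
  proof eventually_elim
    case (elim N)
    show ?case
    proof
      fix k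
      have "norm (wz_F a b (of_nat k + \<alpha>) (Suc N)) \<le> ratio_bound r N * norm (wz_F a b (of_nat k + \<alpha>) N)"
        using elim(2) by (intro norm_wz_F_Suc_le) (simp_all add: r_def)
      also have "\<dots> \<le> 1 / 2 * norm (wz_F a b (of_nat k + \<alpha>) N)"
        using elim(1) by (intro mult_right_mono) simp_all
      finally show "norm (wz_F a b (of_nat k + \<alpha>) (Suc N)) \<le> 1 / 2 * norm (wz_F a b (of_nat k + \<alpha>) N)" .
    qed
  qed
qed simp_all

theorem theorem3:
  fixes \<alpha> a b :: complex
  assumes "\<alpha> + a \<notin> \<int>\<^sub>\<le>\<^sub>0" "\<alpha> - a \<notin> \<int>\<^sub>\<le>\<^sub>0"
      and "\<alpha> + b \<notin> \<int>\<^sub>\<le>\<^sub>0" "\<alpha> - b \<notin> \<int>\<^sub>\<le>\<^sub>0"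
  defines "L \<equiv> (\<lambda>k::nat. (of_nat k + \<alpha>) /
              (((of_nat k + \<alpha>)\<^sup>2 - a\<^sup>2) * ((of_nat k + \<alpha>)\<^sup>2 - b\<^sup>2)))"
      and "R \<equiv> (\<lambda>n::nat. (-1) ^ (n - 1)
              * (pochhammer (1 + a + b) (n - 1) * pochhammer (1 + a - b) (n - 1)
                 * pochhammer (1 - a + b) (n - 1) * pochhammer (1 - a - b) (n - 1))
              * (5 * of_nat n ^ 2 - 6 * of_nat n * (1 - \<alpha>) + 2 * (1 - \<alpha>)\<^sup>2 - a\<^sup>2 - b\<^sup>2)
              / (of_nat n * of_nat (2 * n choose n)
                 * (pochhammer (\<alpha> + a) n * pochhammer (\<alpha> - a) n)
                 * (pochhammer (\<alpha> + b) n * pochhammer (\<alpha> - b) n)))"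
  shows "summable L \<and> summable (\<lambda>n. R (Suc n)) \<and>
         (\<Sum>k. L k) = 1/2 * (\<Sum>n. R (Suc n))"
proof -
  define F where "F n k = wz_F a b (of_nat k + \<alpha>) n" for n k
  define G where "G n k = rhs_term a b (of_nat k + \<alpha>) (Suc n) / 2" for n k
  have summable: "summable (F n)" for n
    unfolding F_def by (rule summable_norm_cancel[OF summable_norm_wz_F])
  have "(\<lambda>n. G n 0) sums suminf (F 0)"
  proof (rule wz_pair_sums[OF _ summable])
    show "F n k - F (Suc n) k = G n k - G n (Suc k)" for n k
      using wz_F_difference[OF poch_den_of_nat_add_neq_0[OF assms(1-4)]]
      by (simp add: F_def G_def add_ac)
    show "G n \<longlonglongrightarrow> 0" for n
      unfolding G_def using rhs_term_tendsto_0 by (rule tendsto_divide_zero)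
    show "(\<lambda>n. suminf (F n)) \<longlonglongrightarrow> 0"
      unfolding F_def by (rule suminf_wz_F_tendsto_0)
  qed
  moreover have "F 0 = L"
    by (simp add: fun_eq_iff F_def L_def wz_F_0 quartic_def)
  moreover have "G n 0 = R (Suc n) / 2" for n
    by (simp add: G_def R_def rhs_term_def poch_num_def poch_den_def rhs_quadratic_def)
  ultimately have "(\<lambda>n. R (Suc n) / 2) sums suminf L"
    by simp
  then have "(\<lambda>n. R (Suc n)) sums (2 * suminf L)"
    using sums_mult[of _ _ 2] by fastforce
  then show ?thesis
    using summable[of 0] \<open>F 0 = L\<close> by (auto simp: sums_iff)
qed

end
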